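(* Let $\{\varphi_i\}_{i=1}^N$ and $\{\psi_i\}_{i=1}^N$ be frames for $\mathbb{R}^d$ with analysis operators $\Phi,\Psi\in\mathbb{R}^{N\times d}$, and let $\Psi^\dagger$ be the Moore–Penrose pseudoinverse of $\Psi$. If $\Psi^\dagger\Phi$ has no negative eigenvalues and $\{(\varphi_i,\psi_i)\}_{i=1}^N$ is a cyclically monotone set, then every measure $\mu_t$, $t\in[0,1]$, on the Wasserstein geodesic between $\mu_\Phi=\frac1N\sum_i\delta_{\varphi_i}$ and $\mu_\Psi=\frac1N\sum_i\delta_{\psi_i}$ has support which spans $\mathbb{R}^d$.
   Context: A finite frame is a finite spanning set of $\mathbb{R}^d$; its analysis operator is the matrix whose rows are the frame vectors. A set $S\subset\mathbb{R}^d\times\mathbb{R}^d$ is cyclically monotone if for every finite subset $\{(x_1,y_1),\dots,(x_n,y_n)\}\subset S$ and every permutation $\sigma$ of $\{1,\dots,n\}$, $\sum_i\langle x_i,y_i\rangle\ge\sum_i\langle x_i,y_{\sigma(i)}\rangle$. Geodesic: for probability measures $\mu_0,\mu_1$ with finite second moments, let $\gamma_0$ be an optimal coupling for the 2-Wasserstein distance (minimizing $\iint\|x-y\|^2d\gamma$ over couplings of $\mu_0,\mu_1$); the geodesic measure $\mu_t$ is defined by $\int G\,d\mu_t=\iint G((1-t)x+ty)\,d\gamma_0(x,y)$ for all bounded continuous $G$. *)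

theory Defs
  imports "HOL-Analysis.Analysis" "HOL-Probability.Probability_Mass_Function"
begin

definition analysis_op :: "('n::finite \<Rightarrow> real^'d) \<Rightarrow> real^'d^'n" where
  "analysis_op f = (\<chi> i. f i)"

definition is_frame :: "('n::finite \<Rightarrow> real^'d) \<Rightarrow> bool" where
  "is_frame f \<longleftrightarrow> span (range f) = UNIV"

definition mp_pinv :: "real^'d^'n \<Rightarrow> real^'n^'d" where
  "mp_pinv A = (THE X. A ** X ** A = A \<and> X ** A ** X = X \<and>
       transpose (A ** X) = A ** X \<and> transpose (X ** A) = X ** A)"

definition is_eigenvalue :: "real^'d^'d \<Rightarrow> real \<Rightarrow> bool" where
  "is_eigenvalue M l \<longleftrightarrow> (\<exists>v. v \<noteq> 0 \<and> M *v v = l *\<^sub>R v)"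

definition cyclically_monotone :: "('a::real_inner \<times> 'a) set \<Rightarrow> bool" where
  "cyclically_monotone S \<longleftrightarrow>
     (\<forall>(n::nat) (x::nat \<Rightarrow> 'a) y \<sigma>. (\<forall>i<n. (x i, y i) \<in> S) \<longrightarrow> \<sigma> permutes {..<n} \<longrightarrow>
        (\<Sum>i<n. x i \<bullet> y (\<sigma> i)) \<le> (\<Sum>i<n. x i \<bullet> y i))"

definition empirical :: "('n::finite \<Rightarrow> 'a) \<Rightarrow> 'a pmf" where
  "empirical f = map_pmf f (pmf_of_set (UNIV :: 'n set))"

definition pair_coupling :: "('n::finite \<Rightarrow> 'a) \<Rightarrow> ('n \<Rightarrow> 'a) \<Rightarrow> ('a \<times> 'a) pmf" where
  "pair_coupling f g = map_pmf (\<lambda>i. (f i, g i)) (pmf_of_set (UNIV :: 'n set))"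

definition is_coupling :: "'a pmf \<Rightarrow> 'a pmf \<Rightarrow> ('a \<times> 'a) pmf \<Rightarrow> bool" where
  "is_coupling \<mu> \<nu> \<gamma> \<longleftrightarrow> map_pmf fst \<gamma> = \<mu> \<and> map_pmf snd \<gamma> = \<nu>"

definition transport_cost :: "('a::real_normed_vector \<times> 'a) pmf \<Rightarrow> real" where
  "transport_cost \<gamma> = measure_pmf.expectation \<gamma> (\<lambda>(x, y). (norm (x - y))\<^sup>2)"

definition optimal_coupling :: "'a::real_normed_vector pmf \<Rightarrow> 'a pmf \<Rightarrow> ('a \<times> 'a) pmf \<Rightarrow> bool" where
  "optimal_coupling \<mu> \<nu> \<gamma> \<longleftrightarrow> is_coupling \<mu> \<nu> \<gamma> \<and>
     (\<forall>\<gamma>'. is_coupling \<mu> \<nu> \<gamma>' \<longrightarrow> transport_cost \<gamma> \<le> transport_cost \<gamma>')"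

definition geodesic_measure :: "('a::real_vector \<times> 'a) pmf \<Rightarrow> real \<Rightarrow> 'a pmf" where
  "geodesic_measure \<gamma> t = map_pmf (\<lambda>(x, y). (1 - t) *\<^sub>R x + t *\<^sub>R y) \<gamma>"

end

theory Submission
  imports Defs
begin

text \<open>
  Cyclic monotonicity of the pairs \<open>(\<phi>\<^sub>i, \<psi>\<^sub>i)\<close> yields, by Rockafellar's construction, a
  potential \<open>h\<close> with \<open>h\<^sub>j + \<langle>\<psi>\<^sub>j, \<phi>\<^sub>k - \<phi>\<^sub>j\<rangle> \<le> h\<^sub>k\<close>; from it one reads off a pair of
  Kantorovich dual potentials that is tight on the coupling \<open>i \<mapsto> (\<phi>\<^sub>i, \<psi>\<^sub>i)\<close>, so this
  coupling is optimal. The geodesic measure \<open>\<mu>\<^sub>t\<close> is then supported on the interpolated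
  family \<open>(1 - t) \<phi>\<^sub>i + t \<psi>\<^sub>i\<close>, whose analysis operator is \<open>(1 - t) \<Phi> + t \<Psi>\<close>. Since \<open>\<Psi>\<close>
  is injective, \<open>\<Psi>\<^sup>\<dagger>\<close> is a left inverse of it, so a kernel vector \<open>v \<noteq> 0\<close> of that operator
  for \<open>0 < t < 1\<close> would satisfy \<open>\<Psi>\<^sup>\<dagger>\<Phi> v = -t/(1 - t) v\<close>, a negative eigenvalue.
\<close>

lemma analysis_op_mult_nth: "(analysis_op f *v v) $ i = f i \<bullet> v"
  by (simp add: analysis_op_def matrix_vector_mult_def inner_vec_def mult.commute)

lemma analysis_op_convex_comb:
  "analysis_op (\<lambda>i. (1 - t) *\<^sub>R f i + t *\<^sub>R g i) = (1 - t) *\<^sub>R analysis_op f + t *\<^sub>R analysis_op g"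
  by (simp add: analysis_op_def vec_eq_iff)

lemma orthogonal_comp_span: "(span S)\<^sup>\<bottom> = S\<^sup>\<bottom>"
  by (auto simp: orthogonal_comp_def intro: span_base)
    (meson orthogonal_commute orthogonal_to_span)

lemma span_eq_UNIV_iff_orthogonal_comp:
  fixes S :: "'a::euclidean_space set"
  shows "span S = UNIV \<longleftrightarrow> S\<^sup>\<bottom> = {0}"
  by (metis orthogonal_comp_span orthogonal_comp_UNIV orthogonal_comp_null
      orthogonal_comp_self subspace_span)

lemma is_frame_iff_analysis_op_injective:
  fixes f :: "'n::finite \<Rightarrow> real^'d"
  shows "is_frame f \<longleftrightarrow> (\<forall>v. analysis_op f *v v = 0 \<longrightarrow> v = 0)"
proof -
  have "analysis_op f *v v = 0 \<longleftrightarrow> v \<in> (range f)\<^sup>\<bottom>" for v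
    by (auto simp: vec_eq_iff analysis_op_mult_nth orthogonal_comp_def orthogonal_def inner_commute)
  then show ?thesis
    unfolding is_frame_def span_eq_UNIV_iff_orthogonal_comp
    using subspace_0[OF subspace_orthogonal_comp] by auto
qed

definition is_pseudoinverse :: "real^'d^'n \<Rightarrow> real^'n^'d \<Rightarrow> bool" where
  "is_pseudoinverse A X \<longleftrightarrow> A ** X ** A = A \<and> X ** A ** X = X \<and>
     transpose (A ** X) = A ** X \<and> transpose (X ** A) = X ** A"

lemma is_pseudoinverse_unique:
  assumes X: "is_pseudoinverse A X" and Y: "is_pseudoinverse A Y"
  shows "X = Y"
proof -
  have AXA: "A ** X ** A = A" and XAX: "X ** A ** X = X"
    and AX: "transpose (A ** X) = A ** X" and XA: "transpose (X ** A) = X ** A"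
    using X by (simp_all add: is_pseudoinverse_def)
  have AYA: "A ** Y ** A = A" and YAY: "Y ** A ** Y = Y"
    and AY: "transpose (A ** Y) = A ** Y" and YA: "transpose (Y ** A) = Y ** A"
    using Y by (simp_all add: is_pseudoinverse_def)
  have At_AY: "transpose A ** (A ** Y) = transpose A"
    using arg_cong[OF AYA, of transpose] AY by (simp add: matrix_transpose_mul)
  have "transpose (X ** A) ** transpose A = transpose A"
    by (metis AXA matrix_mul_assoc matrix_transpose_mul)
  then have XA_At: "X ** A ** transpose A = transpose A"
    by (simp only: XA)
  have "X = X ** transpose X ** transpose A"
    by (metis XAX AX matrix_mul_assoc matrix_transpose_mul)
  also have "\<dots> = X ** transpose X ** (transpose A ** (A ** Y))"
    by (simp only: At_AY)
  also have "\<dots> = X ** transpose (A ** X) ** A ** Y"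
    by (simp add: matrix_transpose_mul matrix_mul_assoc)
  also have "\<dots> = X ** A ** Y"
    by (metis AX XAX matrix_mul_assoc)
  also have "\<dots> = X ** A ** transpose (Y ** A) ** Y"
    by (metis YA YAY matrix_mul_assoc)
  also have "\<dots> = (X ** A ** transpose A) ** transpose Y ** Y"
    by (simp add: matrix_transpose_mul matrix_mul_assoc)
  also have "\<dots> = transpose (Y ** A) ** Y"
    by (simp add: XA_At matrix_transpose_mul)
  also have "\<dots> = Y"
    by (metis YA YAY)
  finally show ?thesis .
qed

lemma mp_pinv_eqI: "is_pseudoinverse A X \<Longrightarrow> mp_pinv A = X"
  unfolding mp_pinv_def is_pseudoinverse_def[symmetric]
  using is_pseudoinverse_unique by blast

lemma mp_pinv_left_inverse:
  fixes A :: "real^'d^'n"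
  assumes inj: "\<And>v. A *v v = 0 \<Longrightarrow> v = 0"
  shows "mp_pinv A ** A = mat 1"
proof -
  have "v = 0" if "(transpose A ** A) *v v = 0" for v
  proof -
    have "(A *v v) \<bullet> (A *v v) = v \<bullet> ((transpose A ** A) *v v)"
      by (simp add: matrix_vector_mul_assoc[symmetric] dot_lmul_matrix[symmetric] inner_commute)
    then show ?thesis
      using that inj by simp
  qed
  then obtain C where C: "C ** (transpose A ** A) = mat 1"
    using matrix_left_invertible_ker by blast
  then have C_right: "(transpose A ** A) ** C = mat 1"
    using matrix_left_right_inverse by blast
  have "transpose C ** (transpose A ** A) = mat 1"
    using arg_cong[OF C_right, of transpose] by (simp add: matrix_transpose_mul matrix_mul_assoc)
  then have C_sym: "transpose C = C"
    by (metis C_right matrix_mul_assoc matrix_mul_lid matrix_mul_rid)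
  define X where "X = C ** transpose A"
  have XA: "X ** A = mat 1"
    using C by (simp add: X_def matrix_mul_assoc)
  have "is_pseudoinverse A X"
    unfolding is_pseudoinverse_def
    by (simp add: XA matrix_mul_assoc[symmetric])
      (simp add: X_def matrix_transpose_mul C_sym matrix_mul_assoc)
  then show ?thesis
    using XA by (simp add: mp_pinv_eqI)
qed

lemma convex_comb_injective_if_no_negative_eigenvalue:
  fixes A B :: "real^'d^'n"
  assumes A: "\<And>v. A *v v = 0 \<Longrightarrow> v = 0" and B: "\<And>v. B *v v = 0 \<Longrightarrow> v = 0"
    and no_neg: "\<not> (\<exists>l<0. is_eigenvalue (mp_pinv B ** A) l)"
    and t: "0 \<le> t" "t \<le> 1"
    and v: "((1 - t) *\<^sub>R A + t *\<^sub>R B) *v v = 0"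
  shows "v = 0"
proof -
  have comb: "(1 - t) *\<^sub>R (A *v v) + t *\<^sub>R (B *v v) = 0"
    using v by (simp add: matrix_vector_mult_add_rdistrib scaleR_matrix_vector_assoc)
  consider "t = 0" | "t = 1" | "0 < t" "t < 1"
    using t by fastforce
  then show ?thesis
  proof cases
    case 1
    then show ?thesis using comb A by simp
  next
    case 2
    then show ?thesis using comb B by simp
  next
    case 3
    have "mp_pinv B *v ((1 - t) *\<^sub>R (A *v v) + t *\<^sub>R (B *v v)) = 0"
      using comb by simp
    then have "(1 - t) *\<^sub>R ((mp_pinv B ** A) *v v) + t *\<^sub>R v = 0"
      by (simp add: matrix_vector_right_distrib matrix_vector_mult_scaleR
          matrix_vector_mul_assoc mp_pinv_left_inverse[OF B])
    then have "(1 - t) *\<^sub>R ((mp_pinv B ** A) *v v) = (1 - t) *\<^sub>R ((- t / (1 - t)) *\<^sub>R v)"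
      using 3 by (simp add: eq_neg_iff_add_eq_0)
    moreover have "1 - t \<noteq> 0"
      using 3 by simp
    ultimately have "(mp_pinv B ** A) *v v = (- t / (1 - t)) *\<^sub>R v"
      by (simp only: scaleR_cancel_left) simp
    moreover have "- t / (1 - t) < 0"
      using 3 by simp
    ultimately show ?thesis
      using no_neg unfolding is_eigenvalue_def by blast
  qed
qed

lemma is_frame_convex_comb:
  fixes \<phi> \<psi> :: "'n::finite \<Rightarrow> real^'d"
  assumes "is_frame \<phi>" "is_frame \<psi>"
    and "\<not> (\<exists>l<0. is_eigenvalue (mp_pinv (analysis_op \<psi>) ** analysis_op \<phi>) l)"
    and "0 \<le> t" "t \<le> 1"
  shows "is_frame (\<lambda>i. (1 - t) *\<^sub>R \<phi> i + t *\<^sub>R \<psi> i)"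
  using assms(1,2) convex_comb_injective_if_no_negative_eigenvalue[OF _ _ assms(3-5)]
  by (simp add: is_frame_iff_analysis_op_injective analysis_op_convex_comb)

definition chain_gain :: "('i \<Rightarrow> 'a::real_inner) \<Rightarrow> ('i \<Rightarrow> 'a) \<Rightarrow> (nat \<Rightarrow> 'i) \<Rightarrow> nat \<Rightarrow> real" where
  "chain_gain \<phi> \<psi> c n = (\<Sum>k<n. \<psi> (c k) \<bullet> (\<phi> (c (Suc k)) - \<phi> (c k)))"

lemma chain_gain_extend:
  "chain_gain \<phi> \<psi> (c(Suc n := j)) (Suc n) = chain_gain \<phi> \<psi> c n + \<psi> (c n) \<bullet> (\<phi> j - \<phi> (c n))"
  unfolding chain_gain_def by (auto intro!: sum.cong)

lemma rotation_permutes: "(\<lambda>k::nat. if k = 0 then n else if k \<le> n then k - 1 else k) permutes {..n}"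
  by (rule bij_imp_permutes, rule bij_betw_byWitness[where f' = "\<lambda>k. if k = n then 0 else k + 1"])
    auto

lemma chain_gain_cycle_nonpos:
  assumes "cyclically_monotone (range (\<lambda>i. (\<phi> i, \<psi> i)))"
  shows "chain_gain \<phi> \<psi> c n + \<psi> (c n) \<bullet> (\<phi> (c 0) - \<phi> (c n)) \<le> 0"
proof -
  define \<sigma> where "\<sigma> = (\<lambda>k. if k = 0 then n else if k \<le> n then k - 1 else k)"
  have "\<sigma> permutes {..<Suc n}"
    unfolding \<sigma>_def lessThan_Suc_atMost by (rule rotation_permutes)
  then have "(\<Sum>k<Suc n. \<phi> (c k) \<bullet> \<psi> (c (\<sigma> k))) \<le> (\<Sum>k<Suc n. \<phi> (c k) \<bullet> \<psi> (c k))"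
    using assms[unfolded cyclically_monotone_def, rule_format,
        of "Suc n" "\<lambda>k. \<phi> (c k)" "\<lambda>k. \<psi> (c k)" \<sigma>]
    by auto
  moreover have "(\<Sum>k<Suc n. \<phi> (c k) \<bullet> \<psi> (c (\<sigma> k)))
      = \<phi> (c 0) \<bullet> \<psi> (c n) + (\<Sum>k<n. \<phi> (c (Suc k)) \<bullet> \<psi> (c k))"
    by (simp only: sum.lessThan_Suc_shift) (simp add: \<sigma>_def)
  ultimately show ?thesis
    by (simp add: chain_gain_def inner_diff_right inner_commute sum_subtractf)
qed

lemma cyclically_monotone_potential:
  fixes \<phi> \<psi> :: "'i \<Rightarrow> 'a::real_inner"
  assumes "cyclically_monotone (range (\<lambda>i. (\<phi> i, \<psi> i)))"
  obtains h where "\<And>j k. h j + \<psi> j \<bullet> (\<phi> k - \<phi> j) \<le> h k"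
proof -
  fix i0 :: 'i
  define chains :: "'i \<Rightarrow> ((nat \<Rightarrow> 'i) \<times> nat) set"
    where "chains j = {(c, n). c 0 = i0 \<and> c n = j}" for j
  define h where "h j = (SUP (c, n)\<in>chains j. chain_gain \<phi> \<psi> c n)" for j
  have nonempty: "chains j \<noteq> {}" for j
    unfolding chains_def by (auto intro!: exI[of _ "(\<lambda>_. i0)(1 := j)"] exI[of _ 1])
  have bounded: "bdd_above ((\<lambda>(c, n). chain_gain \<phi> \<psi> c n) ` chains j)" for j
  proof (rule bdd_aboveI2)
    fix p assume "p \<in> chains j"
    then obtain c n where "p = (c, n)" "c 0 = i0" "c n = j"
      by (auto simp: chains_def)
    then show "(case p of (c, n) \<Rightarrow> chain_gain \<phi> \<psi> c n) \<le> \<psi> j \<bullet> (\<phi> j - \<phi> i0)"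
      using chain_gain_cycle_nonpos[OF assms, of c n] by (simp add: inner_diff_right)
  qed
  have "h j \<le> h k - \<psi> j \<bullet> (\<phi> k - \<phi> j)" for j k
    unfolding h_def[of j]
  proof (rule cSUP_least[OF nonempty], clarify)
    fix c n assume "(c, n) \<in> chains j"
    then have "(c(Suc n := k), Suc n) \<in> chains k" and "c n = j"
      by (auto simp: chains_def)
    then show "chain_gain \<phi> \<psi> c n \<le> h k - \<psi> j \<bullet> (\<phi> k - \<phi> j)"
      using cSUP_upper[OF _ bounded, of _ k] by (fastforce simp: h_def chain_gain_extend)
  qed
  then show ?thesis
    by (intro that) (simp add: le_diff_eq)
qed

lemma set_pmf_coupling_subset: "is_coupling \<mu> \<nu> \<gamma> \<Longrightarrow> set_pmf \<gamma> \<subseteq> set_pmf \<mu> \<times> set_pmf \<nu>"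
  unfolding is_coupling_def by force

lemma expectation_mono_finite_support:
  fixes f g :: "'a \<Rightarrow> real"
  assumes "finite (set_pmf p)" "\<And>x. x \<in> set_pmf p \<Longrightarrow> f x \<le> g x"
  shows "measure_pmf.expectation p f \<le> measure_pmf.expectation p g"
  using assms by (intro integral_mono_AE integrable_measure_pmf_finite) (auto intro: AE_pmfI)

lemma expectation_coupling_add:
  fixes f g :: "'a \<Rightarrow> real"
  assumes \<gamma>: "is_coupling \<mu> \<nu> \<gamma>" and "finite (set_pmf \<mu>)" "finite (set_pmf \<nu>)"
  shows "measure_pmf.expectation \<gamma> (\<lambda>(x, y). f x + g y)
    = measure_pmf.expectation \<mu> f + measure_pmf.expectation \<nu> g"
proof -
  have "finite (set_pmf \<gamma>)"
    using assms finite_subset[OF set_pmf_coupling_subset[OF \<gamma>]] by blast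
  then have "measure_pmf.expectation \<gamma> (\<lambda>(x, y). f x + g y)
      = measure_pmf.expectation \<gamma> (\<lambda>p. f (fst p)) + measure_pmf.expectation \<gamma> (\<lambda>p. g (snd p))"
    unfolding case_prod_beta
    by (intro Bochner_Integration.integral_add integrable_measure_pmf_finite)
  then show ?thesis
    using \<gamma> by (auto simp: is_coupling_def simp flip: integral_map_pmf)
qed

lemma optimal_coupling_if_dual_certificate:
  fixes \<mu> \<nu> :: "'a::real_inner pmf"
  assumes \<gamma>: "is_coupling \<mu> \<nu> \<gamma>" and fin: "finite (set_pmf \<mu>)" "finite (set_pmf \<nu>)"
    and dual: "\<And>x y. x \<in> set_pmf \<mu> \<Longrightarrow> y \<in> set_pmf \<nu> \<Longrightarrow> x \<bullet> y \<le> F x + G y"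
    and tight: "\<And>x y. (x, y) \<in> set_pmf \<gamma> \<Longrightarrow> F x + G y \<le> x \<bullet> y"
  shows "optimal_coupling \<mu> \<nu> \<gamma>"
proof -
  define Q where "Q = (\<lambda>(x, y). ((norm x)\<^sup>2 - 2 * F x) + ((norm (y::'a))\<^sup>2 - 2 * G y))"
  have cost: "(norm (x - y))\<^sup>2 = (norm x)\<^sup>2 + (norm y)\<^sup>2 - 2 * (x \<bullet> y)" for x y :: 'a
    by (simp add: power2_norm_eq_inner inner_diff_left inner_diff_right inner_commute)
  have finite_coupling: "finite (set_pmf \<gamma>')" if "is_coupling \<mu> \<nu> \<gamma>'" for \<gamma>'
    using fin finite_subset[OF set_pmf_coupling_subset[OF that]] by blast
  have "transport_cost \<gamma> \<le> transport_cost \<gamma>'" if \<gamma>': "is_coupling \<mu> \<nu> \<gamma>'" for \<gamma>'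
  proof -
    have "transport_cost \<gamma> \<le> measure_pmf.expectation \<gamma> Q"
      unfolding transport_cost_def
    proof (intro expectation_mono_finite_support[OF finite_coupling[OF \<gamma>]], clarify)
      fix x y assume "(x, y) \<in> set_pmf \<gamma>"
      then have "F x + G y \<le> x \<bullet> y"
        by (rule tight)
      then show "(norm (x - y))\<^sup>2 \<le> Q (x, y)"
        by (simp add: Q_def cost)
    qed
    also have "\<dots> = measure_pmf.expectation \<gamma>' Q"
      unfolding Q_def expectation_coupling_add[OF \<gamma> fin] expectation_coupling_add[OF \<gamma>' fin] ..
    also have "\<dots> \<le> transport_cost \<gamma>'"
      unfolding transport_cost_def
    proof (intro expectation_mono_finite_support[OF finite_coupling[OF \<gamma>']], clarify)
      fix x y assume "(x, y) \<in> set_pmf \<gamma>'"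
      then have "x \<bullet> y \<le> F x + G y"
        using set_pmf_coupling_subset[OF \<gamma>'] dual by blast
      then show "Q (x, y) \<le> (norm (x - y))\<^sup>2"
        by (simp add: Q_def cost)
    qed
    finally show ?thesis .
  qed
  then show ?thesis
    using \<gamma> unfolding optimal_coupling_def by blast
qed

lemma optimal_pair_coupling_if_potential:
  fixes \<phi> \<psi> :: "'n::finite \<Rightarrow> 'a::real_inner"
  assumes h: "\<And>j k. h j + \<psi> j \<bullet> (\<phi> k - \<phi> j) \<le> h k"
  shows "optimal_coupling (empirical \<phi>) (empirical \<psi>) (pair_coupling \<phi> \<psi>)"
proof (rule optimal_coupling_if_dual_certificate)
  define F where "F x = h (inv \<phi> x)" for x
  define G where "G y = \<phi> (inv \<psi> y) \<bullet> y - h (inv \<psi> y)" for y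
  txt \<open>The choice of preimage does not matter: apply the potential inequality in both directions.\<close>
  have F: "F (\<phi> j) = h j" for j
    using h[of j "inv \<phi> (\<phi> j)"] h[of "inv \<phi> (\<phi> j)" j]
    by (simp add: F_def f_inv_into_f)
  have G: "G (\<psi> i) = \<phi> i \<bullet> \<psi> i - h i" for i
    using h[of i "inv \<psi> (\<psi> i)"] h[of "inv \<psi> (\<psi> i)" i]
    by (simp add: G_def f_inv_into_f inner_diff_right inner_commute)
  show "x \<bullet> y \<le> F x + G y"
    if x: "x \<in> set_pmf (empirical \<phi>)" and y: "y \<in> set_pmf (empirical \<psi>)" for x y
  proof -
    obtain j i where "x = \<phi> j" "y = \<psi> i"
      using x y by (auto simp: empirical_def)
    then show ?thesis
      using h[of i j] by (simp add: F G inner_diff_right inner_commute)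
  qed
  show "F x + G y \<le> x \<bullet> y" if "(x, y) \<in> set_pmf (pair_coupling \<phi> \<psi>)" for x y
    using that by (auto simp: pair_coupling_def F G)
qed (auto simp: is_coupling_def empirical_def pair_coupling_def pmf.map_comp o_def)

lemma set_pmf_geodesic_measure_pair_coupling:
  "set_pmf (geodesic_measure (pair_coupling f g) t) = range (\<lambda>i. (1 - t) *\<^sub>R f i + t *\<^sub>R g i)"
  by (simp add: geodesic_measure_def pair_coupling_def image_image)

theorem mainTheorem5:
  fixes \<phi> \<psi> :: "'n::finite \<Rightarrow> real^'d"
  assumes "is_frame \<phi>" and "is_frame \<psi>"
    and "\<not> (\<exists>l<0. is_eigenvalue (mp_pinv (analysis_op \<psi>) ** analysis_op \<phi>) l)"
    and "cyclically_monotone (range (\<lambda>i. (\<phi> i, \<psi> i)))"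
  shows "optimal_coupling (empirical \<phi>) (empirical \<psi>) (pair_coupling \<phi> \<psi>) \<and>
         (\<forall>t\<in>{0..1}. span (set_pmf (geodesic_measure (pair_coupling \<phi> \<psi>) t)) = UNIV)"
proof (intro conjI ballI)
  obtain h where "\<And>j k. h j + \<psi> j \<bullet> (\<phi> k - \<phi> j) \<le> h k"
    using cyclically_monotone_potential[OF assms(4)] by blast
  then show "optimal_coupling (empirical \<phi>) (empirical \<psi>) (pair_coupling \<phi> \<psi>)"
    by (rule optimal_pair_coupling_if_potential)
next
  fix t :: real
  assume "t \<in> {0..1}"
  then have "is_frame (\<lambda>i. (1 - t) *\<^sub>R \<phi> i + t *\<^sub>R \<psi> i)"
    using is_frame_convex_comb[OF assms(1-3)] by simp
  then show "span (set_pmf (geodesic_measure (pair_coupling \<phi> \<psi>) t)) = UNIV"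
    by (simp add: set_pmf_geodesic_measure_pair_coupling is_frame_def)
qed

end
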